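(* Let $(T,\mu,\eta)$ be a monad on a category $\mathcal C$, $(T',\mu',\eta')$ a monad on a category $\mathcal C'$, and $(G\colon\mathcal C\to\mathcal C',V\colon\mathcal C'\to\mathcal C)$ an adjunction with unit $h\colon 1_{\mathcal C}\to VG$ and counit $e\colon GV\to 1_{\mathcal C'}$. Let $\zeta\colon T'G\to GT$ be a natural transformation with $\zeta\mu'_G=G(\mu)\zeta_TT'(\zeta)$ and $\zeta\eta'_G=G(\eta)$. Then the following are equivalent: (i) there is a natural transformation $\xi\colon TV\to VT'$ such that $\xi\mu_V=V(\mu')\xi_{T'}T(\xi)$, $\xi\eta_V=V(\eta')$, $T'(e)=e_{T'}G(\xi)\zeta_V$ and $h_T=V(\zeta)\xi_GT(h)$; (ii) $\zeta$ is invertible. In that case $\xi$ is unique and equals $VT'(e)\,V(\zeta^{-1}_V)\,h_{TV}$.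
   Context: Such a pair $(\zeta,\xi)$ corresponds to a lift of the adjunction $(G,V)$ to an adjunction between the categories of modules $\mathcal C^T$ and $\mathcal C'^{T'}$; $\zeta$ alone corresponds to a lift of $G$, via $(M,r)\mapsto(GM,G(r)\zeta_M)$. *)

theory Defs
  imports Main
begin

text \<open>A minimal, explicit rendering of (small) categories, functors, natural
transformations, monads and adjunctions.  Composition is written in
applicative order: Cmp C g f is "g after f".\<close>

record ('o, 'm) cat =
  Ob  :: "'o set"
  Ar  :: "'m set"
  Dm  :: "'m \<Rightarrow> 'o"
  Cd  :: "'m \<Rightarrow> 'o"
  Idn :: "'o \<Rightarrow> 'm"
  Cmp :: "'m \<Rightarrow> 'm \<Rightarrow> 'm"

definition category :: "('o, 'm) cat \<Rightarrow> bool" where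
  "category C \<longleftrightarrow>
     (\<forall>f\<in>Ar C. Dm C f \<in> Ob C \<and> Cd C f \<in> Ob C) \<and>
     (\<forall>X\<in>Ob C. Idn C X \<in> Ar C \<and> Dm C (Idn C X) = X \<and> Cd C (Idn C X) = X) \<and>
     (\<forall>f\<in>Ar C. \<forall>g\<in>Ar C. Cd C f = Dm C g \<longrightarrow>
        Cmp C g f \<in> Ar C \<and> Dm C (Cmp C g f) = Dm C f \<and> Cd C (Cmp C g f) = Cd C g) \<and>
     (\<forall>f\<in>Ar C. Cmp C (Idn C (Cd C f)) f = f \<and> Cmp C f (Idn C (Dm C f)) = f) \<and>
     (\<forall>f\<in>Ar C. \<forall>g\<in>Ar C. \<forall>k\<in>Ar C. Cd C f = Dm C g \<longrightarrow> Cd C g = Dm C k \<longrightarrow>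
        Cmp C k (Cmp C g f) = Cmp C (Cmp C k g) f)"

record ('o1, 'm1, 'o2, 'm2) ftor =
  omap :: "'o1 \<Rightarrow> 'o2"
  amap :: "'m1 \<Rightarrow> 'm2"

definition is_functor :: "('o1, 'm1) cat \<Rightarrow> ('o2, 'm2) cat \<Rightarrow> ('o1, 'm1, 'o2, 'm2) ftor \<Rightarrow> bool" where
  "is_functor C D F \<longleftrightarrow>
     (\<forall>X\<in>Ob C. omap F X \<in> Ob D) \<and>
     (\<forall>f\<in>Ar C. amap F f \<in> Ar D \<and> Dm D (amap F f) = omap F (Dm C f)
                               \<and> Cd D (amap F f) = omap F (Cd C f)) \<and>
     (\<forall>X\<in>Ob C. amap F (Idn C X) = Idn D (omap F X)) \<and>
     (\<forall>f\<in>Ar C. \<forall>g\<in>Ar C. Cd C f = Dm C g \<longrightarrow>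
        amap F (Cmp C g f) = Cmp D (amap F g) (amap F f))"

definition fcompose :: "('o2, 'm2, 'o3, 'm3) ftor \<Rightarrow> ('o1, 'm1, 'o2, 'm2) ftor \<Rightarrow> ('o1, 'm1, 'o3, 'm3) ftor" where
  "fcompose G F = \<lparr>omap = omap G \<circ> omap F, amap = amap G \<circ> amap F\<rparr>"

definition fid :: "('o, 'm, 'o, 'm) ftor" where
  "fid = \<lparr>omap = id, amap = id\<rparr>"

definition is_nat :: "('o1, 'm1) cat \<Rightarrow> ('o2, 'm2) cat \<Rightarrow> ('o1, 'm1, 'o2, 'm2) ftor
                       \<Rightarrow> ('o1, 'm1, 'o2, 'm2) ftor \<Rightarrow> ('o1 \<Rightarrow> 'm2) \<Rightarrow> bool" where
  "is_nat C D F G \<alpha> \<longleftrightarrow>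
     is_functor C D F \<and> is_functor C D G \<and>
     (\<forall>X\<in>Ob C. \<alpha> X \<in> Ar D \<and> Dm D (\<alpha> X) = omap F X \<and> Cd D (\<alpha> X) = omap G X) \<and>
     (\<forall>f\<in>Ar C. Cmp D (\<alpha> (Cd C f)) (amap F f) = Cmp D (amap G f) (\<alpha> (Dm C f)))"

definition is_monad :: "('o, 'm) cat \<Rightarrow> ('o, 'm, 'o, 'm) ftor \<Rightarrow> ('o \<Rightarrow> 'm) \<Rightarrow> ('o \<Rightarrow> 'm) \<Rightarrow> bool" where
  "is_monad C T \<mu> \<eta> \<longleftrightarrow>
     is_functor C C T \<and> is_nat C C (fcompose T T) T \<mu> \<and> is_nat C C fid T \<eta> \<and>
     (\<forall>X\<in>Ob C. Cmp C (\<mu> X) (amap T (\<mu> X)) = Cmp C (\<mu> X) (\<mu> (omap T X))) \<and>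
     (\<forall>X\<in>Ob C. Cmp C (\<mu> X) (\<eta> (omap T X)) = Idn C (omap T X)) \<and>
     (\<forall>X\<in>Ob C. Cmp C (\<mu> X) (amap T (\<eta> X)) = Idn C (omap T X))"

definition is_adjunction :: "('o1, 'm1) cat \<Rightarrow> ('o2, 'm2) cat \<Rightarrow> ('o1, 'm1, 'o2, 'm2) ftor
     \<Rightarrow> ('o2, 'm2, 'o1, 'm1) ftor \<Rightarrow> ('o1 \<Rightarrow> 'm1) \<Rightarrow> ('o2 \<Rightarrow> 'm2) \<Rightarrow> bool" where
  "is_adjunction C D G V h e \<longleftrightarrow>
     is_functor C D G \<and> is_functor D C V \<and>
     is_nat C C fid (fcompose V G) h \<and> is_nat D D (fcompose G V) fid e \<and>
     (\<forall>X\<in>Ob C. Cmp D (e (omap G X)) (amap G (h X)) = Idn D (omap G X)) \<and>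
     (\<forall>Y\<in>Ob D. Cmp C (amap V (e Y)) (h (omap V Y)) = Idn C (omap V Y))"

definition inverse_arr :: "('o, 'm) cat \<Rightarrow> 'm \<Rightarrow> 'm \<Rightarrow> bool" where
  "inverse_arr C f g \<longleftrightarrow> f \<in> Ar C \<and> g \<in> Ar C \<and> Dm C g = Cd C f \<and> Cd C g = Dm C f \<and>
     Cmp C g f = Idn C (Dm C f) \<and> Cmp C f g = Idn C (Cd C f)"

definition iso_arr :: "('o, 'm) cat \<Rightarrow> 'm \<Rightarrow> bool" where
  "iso_arr C f \<longleftrightarrow> (\<exists>g. inverse_arr C f g)"

definition inv_arr :: "('o, 'm) cat \<Rightarrow> 'm \<Rightarrow> 'm" where
  "inv_arr C f = (SOME g. inverse_arr C f g)"

definition xi_cond where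
  "xi_cond C C' T \<mu> \<eta> T' \<mu>' \<eta>' G V h e \<zeta> \<xi> \<longleftrightarrow>
     is_nat C' C (fcompose T V) (fcompose V T') \<xi> \<and>
     (\<forall>Y\<in>Ob C'. Cmp C (\<xi> Y) (\<mu> (omap V Y))
                 = Cmp C (amap V (\<mu>' Y)) (Cmp C (\<xi> (omap T' Y)) (amap T (\<xi> Y)))) \<and>
     (\<forall>Y\<in>Ob C'. Cmp C (\<xi> Y) (\<eta> (omap V Y)) = amap V (\<eta>' Y)) \<and>
     (\<forall>Y\<in>Ob C'. amap T' (e Y)
                 = Cmp C' (e (omap T' Y)) (Cmp C' (amap G (\<xi> Y)) (\<zeta> (omap V Y)))) \<and>
     (\<forall>X\<in>Ob C. h (omap T X)
                 = Cmp C (amap V (\<zeta> X)) (Cmp C (\<xi> (omap G X)) (amap T (h X))))"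

end

theory Submission
  imports Defs
begin

text \<open>
  The proof works entirely through the adjunction bijection: an arrow \<open>f : A \<rightarrow> VB\<close> is
  determined by its transpose \<open>e\<^sub>B \<cdot> G f\<close>.
  \<^item> If \<open>\<xi>\<close> satisfies (i), then \<open>\<psi>\<^sub>X = e\<^sub>T\<^sub>'\<^sub>G\<^sub>X \<cdot> G(\<xi>\<^sub>G\<^sub>X) \<cdot> GT(h\<^sub>X)\<close> is a two-sided inverse of \<open>\<zeta>\<^sub>X\<close>:
    one side is the fourth condition (with naturality of \<open>\<zeta>\<close>), the other the fifth condition
    (with a triangle identity).  Substituting \<open>\<zeta>\<^sup>-\<^sup>1 = \<psi>\<close> into the fifth condition then yields
    the explicit formula for \<open>\<xi>\<close>, hence uniqueness.
  \<^item> If \<open>\<zeta>\<close> is invertible, define \<open>\<xi>\<close> by that formula.  Its transpose is \<open>T'(e) \<cdot> \<zeta>\<^sup>-\<^sup>1\<^sub>V\<close>;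
    since \<open>\<zeta>\<^sup>-\<^sup>1\<close> is again natural and compatible with the monad structures, every condition
    of (i) is checked by comparing transposes.
\<close>

lemma cat_dm: "category C \<Longrightarrow> f \<in> Ar C \<Longrightarrow> Dm C f \<in> Ob C"
  by (simp add: category_def)
lemma cat_cd: "category C \<Longrightarrow> f \<in> Ar C \<Longrightarrow> Cd C f \<in> Ob C"
  by (simp add: category_def)
lemma id_in: "category C \<Longrightarrow> X \<in> Ob C \<Longrightarrow> Idn C X \<in> Ar C"
  by (simp add: category_def)
lemma id_dm: "category C \<Longrightarrow> X \<in> Ob C \<Longrightarrow> Dm C (Idn C X) = X"
  by (simp add: category_def)
lemma id_cd: "category C \<Longrightarrow> X \<in> Ob C \<Longrightarrow> Cd C (Idn C X) = X"
  by (simp add: category_def)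
lemma comp_in:
  "category C \<Longrightarrow> f \<in> Ar C \<Longrightarrow> g \<in> Ar C \<Longrightarrow> Cd C f = Dm C g \<Longrightarrow> Cmp C g f \<in> Ar C"
  by (simp add: category_def)
lemma comp_dm:
  "category C \<Longrightarrow> f \<in> Ar C \<Longrightarrow> g \<in> Ar C \<Longrightarrow> Cd C f = Dm C g \<Longrightarrow> Dm C (Cmp C g f) = Dm C f"
  by (simp add: category_def)
lemma comp_cd:
  "category C \<Longrightarrow> f \<in> Ar C \<Longrightarrow> g \<in> Ar C \<Longrightarrow> Cd C f = Dm C g \<Longrightarrow> Cd C (Cmp C g f) = Cd C g"
  by (simp add: category_def)
lemma id_left: "category C \<Longrightarrow> f \<in> Ar C \<Longrightarrow> Cd C f = Y \<Longrightarrow> Cmp C (Idn C Y) f = f"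
  by (auto simp add: category_def)
lemma id_right: "category C \<Longrightarrow> f \<in> Ar C \<Longrightarrow> Dm C f = Y \<Longrightarrow> Cmp C f (Idn C Y) = f"
  by (auto simp add: category_def)

text \<open>Associativity, oriented so that the simplifier normalises composites to the right.\<close>
lemma assoc:
  "category C \<Longrightarrow> f \<in> Ar C \<Longrightarrow> g \<in> Ar C \<Longrightarrow> k \<in> Ar C \<Longrightarrow> Cd C f = Dm C g \<Longrightarrow> Cd C g = Dm C k \<Longrightarrow>
   Cmp C (Cmp C k g) f = Cmp C k (Cmp C g f)"
  by (simp add: category_def)

lemmas cat_simps = cat_dm cat_cd id_in id_dm id_cd comp_in comp_dm comp_cd id_left id_right assoc

text \<open>An equation \<open>a \<cdot> b = c\<close> (resp. \<open>a \<cdot> b \<cdot> c = d\<close>) can be used inside a right-normalised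
  composite \<open>a \<cdot> (b \<cdot> k)\<close> (resp. \<open>a \<cdot> (b \<cdot> (c \<cdot> k))\<close>); this is how the simplifier is fed
  the rewriting steps of all diagram chases below.\<close>
lemma comp_reassoc:
  assumes "category C" and "Cmp C a b = c"
    and "k \<in> Ar C" "b \<in> Ar C" "a \<in> Ar C" "Cd C k = Dm C b" "Cd C b = Dm C a"
  shows "Cmp C a (Cmp C b k) = Cmp C c k"
  using assms by (simp add: assoc[symmetric])

lemma comp_reassoc3:
  assumes "category C" and "Cmp C a (Cmp C b c) = d"
    and "k \<in> Ar C" "c \<in> Ar C" "b \<in> Ar C" "a \<in> Ar C"
    and "Cd C k = Dm C c" "Cd C c = Dm C b" "Cd C b = Dm C a"
  shows "Cmp C a (Cmp C b (Cmp C c k)) = Cmp C d k"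
proof -
  have "Cmp C a (Cmp C b (Cmp C c k)) = Cmp C (Cmp C a (Cmp C b c)) k"
    using assms(1,3-) by (simp add: cat_simps)
  then show ?thesis using assms(2) by simp
qed

text \<open>Inverses are unique, so \<open>inv_arr\<close> picks out any inverse we exhibit.\<close>
lemma inverse_unique:
  assumes C: "category C" and "inverse_arr C f g" "inverse_arr C f g'"
  shows "g = g'"
proof -
  have t: "f \<in> Ar C" "g \<in> Ar C" "g' \<in> Ar C" "Dm C g = Cd C f" "Cd C g = Dm C f"
      "Dm C g' = Cd C f" "Cd C g' = Dm C f"
    and left: "Cmp C g f = Idn C (Dm C f)" and right: "Cmp C f g' = Idn C (Cd C f)"
    using assms by (auto simp: inverse_arr_def)
  have "g = Cmp C g (Cmp C f g')" using C t by (simp add: right id_right)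
  also have "\<dots> = Cmp C (Cmp C g f) g'" using C t by (simp add: assoc)
  also have "\<dots> = g'" using C t by (simp add: left id_left)
  finally show ?thesis .
qed

lemma inv_arr_eq: "category C \<Longrightarrow> inverse_arr C f g \<Longrightarrow> inv_arr C f = g"
  unfolding inv_arr_def by (rule some_equality) (auto intro: inverse_unique)

lemma inv_arr_inverse: "iso_arr C f \<Longrightarrow> inverse_arr C f (inv_arr C f)"
  unfolding inv_arr_def iso_arr_def by (rule someI_ex)

lemma fo_ob: "is_functor C D F \<Longrightarrow> X \<in> Ob C \<Longrightarrow> omap F X \<in> Ob D"
  by (simp add: is_functor_def)
lemma fo_in: "is_functor C D F \<Longrightarrow> f \<in> Ar C \<Longrightarrow> amap F f \<in> Ar D"
  by (simp add: is_functor_def)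
lemma fo_dm: "is_functor C D F \<Longrightarrow> f \<in> Ar C \<Longrightarrow> Dm D (amap F f) = omap F (Dm C f)"
  by (simp add: is_functor_def)
lemma fo_cd: "is_functor C D F \<Longrightarrow> f \<in> Ar C \<Longrightarrow> Cd D (amap F f) = omap F (Cd C f)"
  by (simp add: is_functor_def)
lemma fo_id: "is_functor C D F \<Longrightarrow> X \<in> Ob C \<Longrightarrow> amap F (Idn C X) = Idn D (omap F X)"
  by (simp add: is_functor_def)
lemma fo_comp:
  "is_functor C D F \<Longrightarrow> f \<in> Ar C \<Longrightarrow> g \<in> Ar C \<Longrightarrow> Cd C f = Dm C g \<Longrightarrow>
   amap F (Cmp C g f) = Cmp D (amap F g) (amap F f)"
  by (simp add: is_functor_def)

lemmas fo_simps = fo_ob fo_in fo_dm fo_cd fo_id fo_comp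

lemma functor_transport:
  "is_functor C D F \<Longrightarrow> Cmp C a b = c \<Longrightarrow> a \<in> Ar C \<Longrightarrow> b \<in> Ar C \<Longrightarrow> Cd C b = Dm C a \<Longrightarrow>
   Cmp D (amap F a) (amap F b) = amap F c"
  by (metis fo_comp)

lemma fcompose_omap [simp]: "omap (fcompose G F) X = omap G (omap F X)"
  by (simp add: fcompose_def)
lemma fcompose_amap [simp]: "amap (fcompose G F) f = amap G (amap F f)"
  by (simp add: fcompose_def)
lemma fid_omap [simp]: "omap fid X = X"
  by (simp add: fid_def)
lemma fid_amap [simp]: "amap fid f = f"
  by (simp add: fid_def)

lemma fcompose_functor:
  "category C \<Longrightarrow> category D \<Longrightarrow> category E \<Longrightarrow> is_functor C D F \<Longrightarrow> is_functor D E G \<Longrightarrow>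
   is_functor C E (fcompose G F)"
  unfolding is_functor_def by (auto simp add: cat_simps)

lemma nt_in: "is_nat C D F G \<alpha> \<Longrightarrow> X \<in> Ob C \<Longrightarrow> \<alpha> X \<in> Ar D"
  by (simp add: is_nat_def)
lemma nt_dm: "is_nat C D F G \<alpha> \<Longrightarrow> X \<in> Ob C \<Longrightarrow> Dm D (\<alpha> X) = omap F X"
  by (simp add: is_nat_def)
lemma nt_cd: "is_nat C D F G \<alpha> \<Longrightarrow> X \<in> Ob C \<Longrightarrow> Cd D (\<alpha> X) = omap G X"
  by (simp add: is_nat_def)
lemma nt_sq:
  "is_nat C D F G \<alpha> \<Longrightarrow> f \<in> Ar C \<Longrightarrow> Dm C f = X \<Longrightarrow> Cd C f = Y \<Longrightarrow>
   Cmp D (\<alpha> Y) (amap F f) = Cmp D (amap G f) (\<alpha> X)"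
  by (auto simp add: is_nat_def)

lemmas nt_simps = nt_in nt_dm nt_cd

lemma nat_inverse:
  assumes C: "category C" and D: "category D" and \<alpha>: "is_nat C D F G \<alpha>"
    and iso: "\<forall>X\<in>Ob C. iso_arr D (\<alpha> X)"
  shows "is_nat C D G F (\<lambda>X. inv_arr D (\<alpha> X))"
proof -
  have F: "is_functor C D F" and G: "is_functor C D G" using \<alpha> by (simp_all add: is_nat_def)
  note ss = cat_simps[OF C] cat_simps[OF D] fo_simps[OF F] fo_simps[OF G] nt_simps[OF \<alpha>]
  have inv: "inv_arr D (\<alpha> X) \<in> Ar D" "Dm D (inv_arr D (\<alpha> X)) = omap G X"
      "Cd D (inv_arr D (\<alpha> X)) = omap F X"
      "Cmp D (inv_arr D (\<alpha> X)) (\<alpha> X) = Idn D (omap F X)"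
      "Cmp D (\<alpha> X) (inv_arr D (\<alpha> X)) = Idn D (omap G X)" if "X \<in> Ob C" for X
    using inv_arr_inverse[of D "\<alpha> X"] iso that by (auto simp: inverse_arr_def ss)
  have square: "Cmp D (inv_arr D (\<alpha> Y)) (amap G f) = Cmp D (amap F f) (inv_arr D (\<alpha> X))"
    if f: "f \<in> Ar C" "Dm C f = X" "Cd C f = Y" for f X Y
  proof -
    have X: "X \<in> Ob C" "Y \<in> Ob C" using f cat_dm[OF C] cat_cd[OF C] by auto
    have "Cmp D (inv_arr D (\<alpha> Y)) (amap G f)
        = Cmp D (inv_arr D (\<alpha> Y)) (Cmp D (amap G f) (Cmp D (\<alpha> X) (inv_arr D (\<alpha> X))))"
      using f X by (simp add: ss inv)
    also have "\<dots> = Cmp D (inv_arr D (\<alpha> Y)) (Cmp D (\<alpha> Y) (Cmp D (amap F f) (inv_arr D (\<alpha> X))))"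
      using f X by (simp add: ss inv(1-3) comp_reassoc[OF D nt_sq[OF \<alpha> f, symmetric]])
    also have "\<dots> = Cmp D (amap F f) (inv_arr D (\<alpha> X))"
      using f X by (simp add: ss inv comp_reassoc[OF D inv(4)])
    finally show ?thesis .
  qed
  show ?thesis
    unfolding is_nat_def using F G inv square by blast
qed

locale adjunction_data =
  fixes C :: "('a, 'b) cat" and D :: "('c, 'd) cat"
    and G :: "('a, 'b, 'c, 'd) ftor" and V :: "('c, 'd, 'a, 'b) ftor"
    and h :: "'a \<Rightarrow> 'b" and e :: "'c \<Rightarrow> 'd"
  assumes cC: "category C" and cD: "category D"
    and adj: "is_adjunction C D G V h e"
begin

lemma fG: "is_functor C D G" using adj by (simp add: is_adjunction_def)
lemma fV: "is_functor D C V" using adj by (simp add: is_adjunction_def)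
lemma hN: "is_nat C C fid (fcompose V G) h" using adj by (simp add: is_adjunction_def)
lemma eN: "is_nat D D (fcompose G V) fid e" using adj by (simp add: is_adjunction_def)
lemma triangle_G: "X \<in> Ob C \<Longrightarrow> Cmp D (e (omap G X)) (amap G (h X)) = Idn D (omap G X)"
  using adj by (simp add: is_adjunction_def)
lemma triangle_V: "Y \<in> Ob D \<Longrightarrow> Cmp C (amap V (e Y)) (h (omap V Y)) = Idn C (omap V Y)"
  using adj by (simp add: is_adjunction_def)

lemmas adj_simps = cat_simps[OF cC] cat_simps[OF cD] fo_simps[OF fG] fo_simps[OF fV]
  nt_simps[OF hN] nt_simps[OF eN]
lemmas h_sq = nt_sq[OF hN, simplified]
lemmas e_sq = nt_sq[OF eN, simplified]

lemma transpose_inverse: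
  assumes "A \<in> Ob C" "B \<in> Ob D" "f \<in> Ar C" "Dm C f = A" "Cd C f = omap V B"
  shows "f = Cmp C (amap V (Cmp D (e B) (amap G f))) (h A)"
proof -
  have "Cmp C (amap V (Cmp D (e B) (amap G f))) (h A)
      = Cmp C (amap V (e B)) (Cmp C (h (omap V B)) f)"
    using assms by (simp add: adj_simps h_sq[of f A "omap V B", symmetric])
  also have "\<dots> = f" using assms by (simp add: adj_simps comp_reassoc[OF cC triangle_V])
  finally show ?thesis by simp
qed

lemma transpose_inj:
  assumes "A \<in> Ob C" "B \<in> Ob D" "f \<in> Ar C" "Dm C f = A" "Cd C f = omap V B"
    "g \<in> Ar C" "Dm C g = A" "Cd C g = omap V B"
    "Cmp D (e B) (amap G f) = Cmp D (e B) (amap G g)"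
  shows "f = g"
  using transpose_inverse[OF assms(1-5)] transpose_inverse[OF assms(1,2,6-8)] assms(9) by simp

end

locale lifting_data = adjunction_data C D G V h e
  for C :: "('a, 'b) cat" and D :: "('c, 'd) cat"
    and G :: "('a, 'b, 'c, 'd) ftor" and V :: "('c, 'd, 'a, 'b) ftor"
    and h :: "'a \<Rightarrow> 'b" and e :: "'c \<Rightarrow> 'd" +
  fixes T :: "('a, 'b, 'a, 'b) ftor" and mu eta :: "'a \<Rightarrow> 'b"
    and T' :: "('c, 'd, 'c, 'd) ftor" and mu' eta' :: "'c \<Rightarrow> 'd"
    and z :: "'a \<Rightarrow> 'd"
  assumes mT: "is_monad C T mu eta" and mT': "is_monad D T' mu' eta'"
    and zN: "is_nat C D (fcompose T' G) (fcompose G T) z"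
    and z_mu: "\<forall>X\<in>Ob C. Cmp D (z X) (mu' (omap G X))
                 = Cmp D (amap G (mu X)) (Cmp D (z (omap T X)) (amap T' (z X)))"
    and z_eta: "\<forall>X\<in>Ob C. Cmp D (z X) (eta' (omap G X)) = amap G (eta X)"
begin

lemma fT: "is_functor C C T" using mT by (simp add: is_monad_def)
lemma fT': "is_functor D D T'" using mT' by (simp add: is_monad_def)
lemma muN: "is_nat C C (fcompose T T) T mu" using mT by (simp add: is_monad_def)
lemma etaN: "is_nat C C fid T eta" using mT by (simp add: is_monad_def)
lemma mu'N: "is_nat D D (fcompose T' T') T' mu'" using mT' by (simp add: is_monad_def)
lemma eta'N: "is_nat D D fid T' eta'" using mT' by (simp add: is_monad_def)

lemmas ss = adj_simps fo_simps[OF fT] fo_simps[OF fT']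
  nt_simps[OF muN] nt_simps[OF etaN] nt_simps[OF mu'N] nt_simps[OF eta'N] nt_simps[OF zN]

lemmas mu'_sq = nt_sq[OF mu'N, simplified]
lemmas eta'_sq = nt_sq[OF eta'N, simplified]
lemmas z_sq = nt_sq[OF zN, simplified]

lemma T'_triangle_G:
  "X \<in> Ob C \<Longrightarrow> Cmp D (amap T' (e (omap G X))) (amap T' (amap G (h X))) = Idn D (omap T' (omap G X))"
  using functor_transport[OF fT' triangle_G[of X]] by (simp add: ss)

lemma T_triangle_V:
  "Y \<in> Ob D \<Longrightarrow> Cmp C (amap T (amap V (e Y))) (amap T (h (omap V Y))) = Idn C (omap T (omap V Y))"
  using functor_transport[OF fT triangle_V[of Y]] by (simp add: ss)

subsection \<open>From a compatible \<open>\<xi>\<close> to the invertibility of \<open>\<zeta>\<close>\<close>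

context
  fixes xi assumes xi: "xi_cond C D T mu eta T' mu' eta' G V h e z xi"
begin

lemma xiN: "is_nat D C (fcompose T V) (fcompose V T') xi"
  using xi by (simp add: xi_cond_def)
lemma xi_counit:
  "Y \<in> Ob D \<Longrightarrow> amap T' (e Y) = Cmp D (e (omap T' Y)) (Cmp D (amap G (xi Y)) (z (omap V Y)))"
  using xi by (simp add: xi_cond_def)
lemma xi_unit:
  "X \<in> Ob C \<Longrightarrow> h (omap T X) = Cmp C (amap V (z X)) (Cmp C (xi (omap G X)) (amap T (h X)))"
  using xi by (simp add: xi_cond_def)

lemmas xi_sq = nt_sq[OF xiN, simplified]
lemmas xss = ss nt_simps[OF xiN]

text \<open>The candidate inverse of \<open>\<zeta>\<^sub>X\<close>: \<open>\<psi>\<^sub>X = e\<^sub>T\<^sub>'\<^sub>G\<^sub>X \<cdot> G(\<xi>\<^sub>G\<^sub>X) \<cdot> GT(h\<^sub>X)\<close>.\<close>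
definition psi :: "'a \<Rightarrow> 'd" where
  "psi X = Cmp D (e (omap T' (omap G X))) (Cmp D (amap G (xi (omap G X))) (amap G (amap T (h X))))"

text \<open>\<open>\<zeta> \<cdot> \<psi> = 1\<close> is the fifth condition transposed, using a triangle identity.\<close>
lemma z_psi: assumes X: "X \<in> Ob C"
  shows "Cmp D (z X) (psi X) = Idn D (omap G (omap T X))"
proof -
  have "Idn D (omap G (omap T X)) = Cmp D (e (omap G (omap T X))) (amap G (h (omap T X)))"
    using triangle_G[of "omap T X"] X by (simp add: ss)
  also have "\<dots> = Cmp D (z X) (psi X)"
    unfolding psi_def
    using X by (simp add: xss xi_unit comp_reassoc[OF cD e_sq[of "z X" "omap T' (omap G X)" "omap G (omap T X)"]])
  finally show ?thesis by simp
qed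

text \<open>\<open>\<psi> \<cdot> \<zeta> = 1\<close> follows from the fourth condition and naturality of \<open>\<zeta>\<close>.\<close>
lemma psi_z: assumes X: "X \<in> Ob C"
  shows "Cmp D (psi X) (z X) = Idn D (omap T' (omap G X))"
  unfolding psi_def
  using X by (simp add: xss z_sq[of "h X" X "omap V (omap G X)", symmetric]
     comp_reassoc3[OF cD xi_counit[of "omap G X", symmetric]] T'_triangle_G)

lemma z_inverse_psi: "X \<in> Ob C \<Longrightarrow> inverse_arr D (z X) (psi X)"
  unfolding inverse_arr_def using psi_z z_psi by (simp add: xss psi_def)

text \<open>Writing the fifth condition at \<open>VY\<close> and cancelling \<open>V(\<zeta>)\<close> by its inverse gives the
  explicit formula for \<open>\<xi>\<close>.\<close>
lemma xi_formula: assumes Y: "Y \<in> Ob D"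
  shows "xi Y = Cmp C (amap V (amap T' (e Y)))
            (Cmp C (amap V (inv_arr D (z (omap V Y)))) (h (omap T (omap V Y))))"
proof -
  have VY: "omap V Y \<in> Ob C" using Y by (simp add: ss)
  have inv: "inv_arr D (z (omap V Y)) = psi (omap V Y)"
    by (rule inv_arr_eq[OF cD z_inverse_psi[OF VY]])
  have psi: "psi (omap V Y) \<in> Ar D" "Dm D (psi (omap V Y)) = omap G (omap T (omap V Y))"
      "Cd D (psi (omap V Y)) = omap T' (omap G (omap V Y))"
    using z_inverse_psi[OF VY] VY by (simp_all add: inverse_arr_def ss)
  have Vpsi_z: "Cmp C (amap V (psi (omap V Y))) (amap V (z (omap V Y)))
              = Idn C (omap V (omap T' (omap G (omap V Y))))"
    using functor_transport[OF fV psi_z[OF VY]] psi VY by (simp add: ss)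
  show ?thesis unfolding inv
    using Y psi by (simp add: xss xi_unit comp_reassoc[OF cC Vpsi_z]
      comp_reassoc[OF cC xi_sq[of "e Y" "omap G (omap V Y)" Y, symmetric]] T_triangle_V)
qed

end

subsection \<open>From invertibility of \<open>\<zeta>\<close> to a compatible \<open>\<xi>\<close>\<close>

definition z_inv :: "'a \<Rightarrow> 'd" where
  "z_inv X = inv_arr D (z X)"

definition xi_can :: "'c \<Rightarrow> 'b" where
  "xi_can Y = Cmp C (amap V (amap T' (e Y))) (Cmp C (amap V (z_inv (omap V Y))) (h (omap T (omap V Y))))"

context
  assumes iso: "\<forall>X\<in>Ob C. iso_arr D (z X)"
begin

lemma z_invN: "is_nat C D (fcompose G T) (fcompose T' G) z_inv"
  unfolding z_inv_def[abs_def]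
  by (rule nat_inverse[OF cC cD zN iso])

lemma z_inv_z: "X \<in> Ob C \<Longrightarrow> Cmp D (z_inv X) (z X) = Idn D (omap T' (omap G X))"
  and z_z_inv: "X \<in> Ob C \<Longrightarrow> Cmp D (z X) (z_inv X) = Idn D (omap G (omap T X))"
  using inv_arr_inverse[of D "z X"] iso by (auto simp: z_inv_def inverse_arr_def ss)

lemmas tss = ss nt_simps[OF z_invN]
lemmas z_inv_sq = nt_sq[OF z_invN, simplified]

lemma T'_z_z_inv:
  "X \<in> Ob C \<Longrightarrow> Cmp D (amap T' (z X)) (amap T' (z_inv X)) = Idn D (omap T' (omap G (omap T X)))"
  using functor_transport[OF fT' z_z_inv] by (simp add: tss)

lemma z_inv_mu: assumes X: "X \<in> Ob C"
  shows "Cmp D (z_inv X) (amap G (mu X))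
       = Cmp D (mu' (omap G X)) (Cmp D (amap T' (z_inv X)) (z_inv (omap T X)))"
proof -
  have "Cmp D (z_inv X) (amap G (mu X)) = Cmp D (z_inv X) (Cmp D (amap G (mu X)) (Cmp D (z (omap T X))
       (Cmp D (amap T' (z X)) (Cmp D (amap T' (z_inv X)) (z_inv (omap T X))))))"
    using X by (simp add: tss comp_reassoc[OF cD T'_z_z_inv] z_z_inv)
  also have "\<dots> = Cmp D (z_inv X) (Cmp D (z X) (Cmp D (mu' (omap G X))
       (Cmp D (amap T' (z_inv X)) (z_inv (omap T X)))))"
    using X by (simp add: tss comp_reassoc3[OF cD z_mu[rule_format, OF X, symmetric]])
  also have "\<dots> = Cmp D (mu' (omap G X)) (Cmp D (amap T' (z_inv X)) (z_inv (omap T X)))"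
    using X by (simp add: tss comp_reassoc[OF cD z_inv_z])
  finally show ?thesis .
qed

lemma z_inv_eta: assumes X: "X \<in> Ob C"
  shows "Cmp D (z_inv X) (amap G (eta X)) = eta' (omap G X)"
proof -
  have "Cmp D (z_inv X) (amap G (eta X)) = Cmp D (z_inv X) (Cmp D (z X) (eta' (omap G X)))"
    using z_eta X by simp
  also have "\<dots> = eta' (omap G X)"
    using X by (simp add: tss comp_reassoc[OF cD z_inv_z])
  finally show ?thesis .
qed

lemma xi_can_in: "Y \<in> Ob D \<Longrightarrow> xi_can Y \<in> Ar C"
  and xi_can_dm: "Y \<in> Ob D \<Longrightarrow> Dm C (xi_can Y) = omap T (omap V Y)"
  and xi_can_cd: "Y \<in> Ob D \<Longrightarrow> Cd C (xi_can Y) = omap V (omap T' Y)"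
  unfolding xi_can_def by (simp_all add: tss)

lemmas xs = tss xi_can_in xi_can_dm xi_can_cd

text \<open>The key identity: the transpose of \<open>\<xi>\<^sub>Y\<close> is \<open>T'(e\<^sub>Y) \<cdot> \<zeta>\<^sup>-\<^sup>1\<^sub>V\<^sub>Y\<close>.
  All conditions of (i) are verified by comparing transposes with it.\<close>
lemma xi_can_transpose: "Y \<in> Ob D \<Longrightarrow>
  Cmp D (e (omap T' Y)) (amap G (xi_can Y)) = Cmp D (amap T' (e Y)) (z_inv (omap V Y))"
  unfolding xi_can_def
  by (simp add: tss triangle_G
      comp_reassoc[OF cD e_sq[of "amap T' (e Y)" "omap T' (omap G (omap V Y))" "omap T' Y"]]
      comp_reassoc[OF cD e_sq[of "z_inv (omap V Y)" "omap G (omap T (omap V Y))" "omap T' (omap G (omap V Y))"]])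

lemma xi_can_sq: assumes f: "f \<in> Ar D" "Dm D f = Y" "Cd D f = Y'"
  shows "Cmp C (xi_can Y') (amap T (amap V f)) = Cmp C (amap V (amap T' f)) (xi_can Y)"
proof -
  have Y: "Y \<in> Ob D" "Y' \<in> Ob D" using f cat_dm[OF cD] cat_cd[OF cD] by auto
  have "Cmp D (e (omap T' Y')) (amap G (Cmp C (xi_can Y') (amap T (amap V f))))
      = Cmp D (amap T' f) (Cmp D (amap T' (e Y)) (z_inv (omap V Y)))"
    using f Y by (simp add: xs comp_reassoc[OF cD xi_can_transpose]
        z_inv_sq[of "amap V f" "omap V Y" "omap V Y'"]
        comp_reassoc[OF cD functor_transport[OF fT' e_sq[OF f]]])
  moreover have "Cmp D (e (omap T' Y')) (amap G (Cmp C (amap V (amap T' f)) (xi_can Y)))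
      = Cmp D (amap T' f) (Cmp D (amap T' (e Y)) (z_inv (omap V Y)))"
    using f Y by (simp add: xs comp_reassoc[OF cD e_sq[of "amap T' f" "omap T' Y" "omap T' Y'"]]
        xi_can_transpose)
  ultimately show ?thesis
    by (intro transpose_inj[of "omap T (omap V Y)" "omap T' Y'"]) (use f Y in \<open>simp_all add: xs\<close>)
qed

lemma xi_can_nat: "is_nat D C (fcompose T V) (fcompose V T') xi_can"
  unfolding is_nat_def
  using fcompose_functor[OF cD cC cC fV fT] fcompose_functor[OF cD cD cC fT' fV]
  by (auto simp add: xs xi_can_sq)

lemma xi_can_mu: assumes Y: "Y \<in> Ob D"
  shows "Cmp C (xi_can Y) (mu (omap V Y))
       = Cmp C (amap V (mu' Y)) (Cmp C (xi_can (omap T' Y)) (amap T (xi_can Y)))"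
proof (rule transpose_inj)
  have "Cmp D (e (omap T' Y)) (amap G (Cmp C (xi_can Y) (mu (omap V Y))))
      = Cmp D (amap T' (e Y)) (Cmp D (mu' (omap G (omap V Y)))
          (Cmp D (amap T' (z_inv (omap V Y))) (z_inv (omap T (omap V Y)))))"
    using Y by (simp add: xs comp_reassoc[OF cD xi_can_transpose] z_inv_mu)
  moreover have "Cmp D (e (omap T' Y))
        (amap G (Cmp C (amap V (mu' Y)) (Cmp C (xi_can (omap T' Y)) (amap T (xi_can Y)))))
      = Cmp D (amap T' (e Y)) (Cmp D (mu' (omap G (omap V Y)))
          (Cmp D (amap T' (z_inv (omap V Y))) (z_inv (omap T (omap V Y)))))"
    using Y by (simp add: xs comp_reassoc[OF cD e_sq[of "mu' Y" "omap T' (omap T' Y)" "omap T' Y"]]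
       comp_reassoc[OF cD xi_can_transpose]
       z_inv_sq[of "xi_can Y" "omap T (omap V Y)" "omap V (omap T' Y)"]
       comp_reassoc[OF cD functor_transport[OF fT' xi_can_transpose]]
       comp_reassoc[OF cD mu'_sq[of "e Y" "omap G (omap V Y)" Y]])
  ultimately show "Cmp D (e (omap T' Y)) (amap G (Cmp C (xi_can Y) (mu (omap V Y))))
      = Cmp D (e (omap T' Y))
        (amap G (Cmp C (amap V (mu' Y)) (Cmp C (xi_can (omap T' Y)) (amap T (xi_can Y)))))"
    by simp
qed (use Y in \<open>simp_all add: xs\<close>)

lemma xi_can_eta: assumes Y: "Y \<in> Ob D"
  shows "Cmp C (xi_can Y) (eta (omap V Y)) = amap V (eta' Y)"
proof (rule transpose_inj)
  have "Cmp D (e (omap T' Y)) (amap G (Cmp C (xi_can Y) (eta (omap V Y))))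
      = Cmp D (amap T' (e Y)) (eta' (omap G (omap V Y)))"
    using Y by (simp add: xs comp_reassoc[OF cD xi_can_transpose] z_inv_eta)
  moreover have "Cmp D (e (omap T' Y)) (amap G (amap V (eta' Y)))
      = Cmp D (amap T' (e Y)) (eta' (omap G (omap V Y)))"
    using Y by (simp add: xs e_sq[of "eta' Y" Y "omap T' Y"] eta'_sq[of "e Y" "omap G (omap V Y)" Y])
  ultimately show "Cmp D (e (omap T' Y)) (amap G (Cmp C (xi_can Y) (eta (omap V Y))))
      = Cmp D (e (omap T' Y)) (amap G (amap V (eta' Y)))"
    by simp
qed (use Y in \<open>simp_all add: xs\<close>)

lemma xi_can_counit: "Y \<in> Ob D \<Longrightarrow>
  amap T' (e Y) = Cmp D (e (omap T' Y)) (Cmp D (amap G (xi_can Y)) (z (omap V Y)))"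
  by (simp add: xs comp_reassoc[OF cD xi_can_transpose] z_inv_z)

lemma xi_can_unit: assumes X: "X \<in> Ob C"
  shows "h (omap T X) = Cmp C (amap V (z X)) (Cmp C (xi_can (omap G X)) (amap T (h X)))"
  unfolding xi_can_def using X
  by (simp add: tss h_sq[of "amap T (h X)" "omap T X" "omap T (omap V (omap G X))"]
      comp_reassoc[OF cC functor_transport[OF fV z_inv_sq[of "h X" X "omap V (omap G X)"]]]
      comp_reassoc[OF cC functor_transport[OF fV T'_triangle_G]]
      comp_reassoc[OF cC functor_transport[OF fV z_z_inv]])

lemma xi_can_cond: "xi_cond C D T mu eta T' mu' eta' G V h e z xi_can"
  unfolding xi_cond_def
  by (simp add: xi_can_nat xi_can_mu xi_can_eta xi_can_counit xi_can_unit)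

end

end

theorem mainTheorem9:
  fixes C :: "('a, 'b) cat" and C' :: "('c, 'd) cat"
    and T :: "('a, 'b, 'a, 'b) ftor" and \<mu> \<eta> :: "'a \<Rightarrow> 'b"
    and T' :: "('c, 'd, 'c, 'd) ftor" and \<mu>' \<eta>' :: "'c \<Rightarrow> 'd"
    and G :: "('a, 'b, 'c, 'd) ftor" and V :: "('c, 'd, 'a, 'b) ftor"
    and h :: "'a \<Rightarrow> 'b" and e :: "'c \<Rightarrow> 'd"
    and \<zeta> :: "'a \<Rightarrow> 'd"
  assumes "category C" and "category C'"
    and "is_monad C T \<mu> \<eta>" and "is_monad C' T' \<mu>' \<eta>'"
    and "is_adjunction C C' G V h e"
    and "is_nat C C' (fcompose T' G) (fcompose G T) \<zeta>"
    and "\<forall>X\<in>Ob C. Cmp C' (\<zeta> X) (\<mu>' (omap G X))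
                   = Cmp C' (amap G (\<mu> X)) (Cmp C' (\<zeta> (omap T X)) (amap T' (\<zeta> X)))"
    and "\<forall>X\<in>Ob C. Cmp C' (\<zeta> X) (\<eta>' (omap G X)) = amap G (\<eta> X)"
  shows "((\<exists>\<xi>. xi_cond C C' T \<mu> \<eta> T' \<mu>' \<eta>' G V h e \<zeta> \<xi>) \<longleftrightarrow> (\<forall>X\<in>Ob C. iso_arr C' (\<zeta> X)))
       \<and> (\<forall>\<xi>. xi_cond C C' T \<mu> \<eta> T' \<mu>' \<eta>' G V h e \<zeta> \<xi> \<longrightarrow>
            (\<forall>Y\<in>Ob C'. \<xi> Y = Cmp C (amap V (amap T' (e Y)))
                                (Cmp C (amap V (inv_arr C' (\<zeta> (omap V Y)))) (h (omap T (omap V Y))))))"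
proof -
  interpret lifting_data C C' G V h e T \<mu> \<eta> T' \<mu>' \<eta>' \<zeta>
    using assms by unfold_locales auto
  have xi_iso: "\<forall>X\<in>Ob C. iso_arr C' (\<zeta> X)" if "xi_cond C C' T \<mu> \<eta> T' \<mu>' \<eta>' G V h e \<zeta> \<xi>" for \<xi>
    using z_inverse_psi[OF that] unfolding iso_arr_def by blast
  show ?thesis
    using xi_iso xi_can_cond xi_formula by blast
qed

end
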